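(* In the setting described in the context, for every $c_1^*\in\arg\min_{c'\in[K]\setminus\{c^*\}} P_1(c')$ we have $P_1(c_1^* )=P_2(c_1^* )$.
   Context: Let $N_p\ge 1$ and $K\ge 2$ be integers, and write $[m]=\{1,\dots,m\}$. Let real numbers $\rho_i^c$ be given for $i\in[N_p]$ and $c\in[K]$. A vote configuration is a matrix $\tilde V=(\tilde v_i^c)\in\{0,1\}^{N_p\times K}$ with $\sum_{c=1}^K \tilde v_i^c=1$ for every $i\in[N_p]$. Its cost is $O(\tilde V)=\sum_{i=1}^{N_p}\sum_{c=1}^K \rho_i^c\,\tilde v_i^c$. Let $\mathrm{majVote}(\tilde V)$ denote the smallest index among the maximizers of $c\mapsto \sum_{i=1}^{N_p}\tilde v_i^c$. Fix a class $c^*\in[K]$. For $c'\in[K]$ define: - $P_1(c')=\min\{O(\tilde V): \tilde V \text{ a vote configuration with } \sum_{i=1}^{N_p}(\tilde v_i^{c'}-\tilde v_i^{c})\ge \mathbf 1_{c<c'}\ \forall c\in[K]\setminus\{c'\}\}$. The constraint is equivalent to $\mathrm{majVote}(\tilde V)=c'$. - $P_2(c')=\min\{O(\tilde V): \tilde V \text{ a vote configuration with } \sum_{i=1}^{N_p}(\tilde v_i^{c'}-\tilde v_i^{c^*})\ge \mathbf 1_{c^*<c'}\}$. Here $\mathbf 1_{a<b}$ equals $1$ if $a<b$ and $0$ otherwise. *)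

theory Defs
  imports Complex_Main
begin

text \<open>A vote configuration is a
 0/1 matrix V with exactly one 1 in every row; entries outside the index
 ranges are fixed to 0 so that the set of configurations is finite.\<close>

definition vote_config :: "nat \<Rightarrow> nat \<Rightarrow> (nat \<Rightarrow> nat \<Rightarrow> nat) \<Rightarrow> bool" where
  "vote_config Np K V \<longleftrightarrow>
     (\<forall>i c. V i c \<in> {0, 1}) \<and>
     (\<forall>i c. (i \<notin> {1..Np} \<or> c \<notin> {1..K}) \<longrightarrow> V i c = 0) \<and>
     (\<forall>i\<in>{1..Np}. (\<Sum>c=1..K. V i c) = 1)"

definition cost :: "nat \<Rightarrow> nat \<Rightarrow> (nat \<Rightarrow> nat \<Rightarrow> real) \<Rightarrow> (nat \<Rightarrow> nat \<Rightarrow> nat) \<Rightarrow> real" where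
  "cost Np K \<rho> V = (\<Sum>i=1..Np. \<Sum>c=1..K. \<rho> i c * real (V i c))"

definition votes :: "nat \<Rightarrow> (nat \<Rightarrow> nat \<Rightarrow> nat) \<Rightarrow> nat \<Rightarrow> int" where
  "votes Np V c = (\<Sum>i=1..Np. int (V i c))"

definition ind_lt :: "nat \<Rightarrow> nat \<Rightarrow> int" where
  "ind_lt a b = (if a < b then 1 else 0)"

definition P1 :: "nat \<Rightarrow> nat \<Rightarrow> (nat \<Rightarrow> nat \<Rightarrow> real) \<Rightarrow> nat \<Rightarrow> real" where
  "P1 Np K \<rho> c' = Min {cost Np K \<rho> V | V. vote_config Np K V \<and>
       (\<forall>c\<in>{1..K} - {c'}. votes Np V c' - votes Np V c \<ge> ind_lt c c')}"

definition P2 :: "nat \<Rightarrow> nat \<Rightarrow> (nat \<Rightarrow> nat \<Rightarrow> real) \<Rightarrow> nat \<Rightarrow> nat \<Rightarrow> real" where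
  "P2 Np K \<rho> cstar c' = Min {cost Np K \<rho> V | V. vote_config Np K V \<and>
       votes Np V c' - votes Np V cstar \<ge> ind_lt cstar c'}"

end

theory Submission
  imports Defs
begin

text \<open>Every configuration whose cost competes in \<open>P2 c\<^sub>1\<close> has some majority winner \<open>m\<close>.
  Since \<open>c\<^sub>1\<close> beats \<open>c\<^sup>*\<close> in it and beating is asymmetric, \<open>m \<noteq> c\<^sup>*\<close>, so its cost is at least
  \<open>P1 m \<ge> P1 c\<^sub>1\<close>. Conversely a configuration won by \<open>c\<^sub>1\<close> has \<open>c\<^sub>1\<close> beating \<open>c\<^sup>*\<close>, so an
  optimiser of \<open>P1 c\<^sub>1\<close> is feasible for \<open>P2 c\<^sub>1\<close>.\<close>

definition beats :: "nat \<Rightarrow> (nat \<Rightarrow> nat \<Rightarrow> nat) \<Rightarrow> nat \<Rightarrow> nat \<Rightarrow> bool" where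
  "beats Np V c' c \<longleftrightarrow> votes Np V c' - votes Np V c \<ge> ind_lt c c'"

definition majority_winner :: "nat \<Rightarrow> nat \<Rightarrow> (nat \<Rightarrow> nat \<Rightarrow> nat) \<Rightarrow> nat \<Rightarrow> bool" where
  "majority_winner Np K V c' \<longleftrightarrow> (\<forall>c\<in>{1..K} - {c'}. beats Np V c' c)"

lemma P1_eq_Min_winner_costs:
  "P1 Np K \<rho> c' = Min (cost Np K \<rho> ` {V. vote_config Np K V \<and> majority_winner Np K V c'})"
  unfolding P1_def majority_winner_def beats_def by (simp add: image_Collect)

lemma P2_eq_Min_beating_costs:
  "P2 Np K \<rho> cstar c' = Min (cost Np K \<rho> ` {V. vote_config Np K V \<and> beats Np V c' cstar})"
  unfolding P2_def beats_def by (simp add: image_Collect)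

lemma beats_asym:
  assumes "a \<noteq> b" and "beats Np V a b"
  shows "\<not> beats Np V b a"
  using assms unfolding beats_def ind_lt_def by (auto split: if_splits)

lemma finite_vote_configs: "finite {V. vote_config Np K V}"
proof -
  define Rows where "Rows = {r :: nat \<Rightarrow> nat. \<forall>c. (c \<in> {1..K} \<longrightarrow> r c \<in> {0, 1}) \<and> (c \<notin> {1..K} \<longrightarrow> r c = 0)}"
  have "finite Rows"
    unfolding Rows_def by (rule finite_set_of_finite_funs) auto
  then have "finite {V. \<forall>i. (i \<in> {1..Np} \<longrightarrow> V i \<in> Rows) \<and> (i \<notin> {1..Np} \<longrightarrow> V i = (\<lambda>_. 0))}"
    by (intro finite_set_of_finite_funs) auto
  moreover have "{V. vote_config Np K V} \<subseteq> {V. \<forall>i. (i \<in> {1..Np} \<longrightarrow> V i \<in> Rows) \<and> (i \<notin> {1..Np} \<longrightarrow> V i = (\<lambda>_. 0))}"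
    unfolding vote_config_def Rows_def by auto
  ultimately show ?thesis
    by (rule finite_subset[rotated])
qed

text \<open>The winner is the smallest maximiser of the vote count, as in \<open>majVote\<close>.\<close>

lemma majority_winner_exists:
  assumes "K \<ge> 1"
  shows "\<exists>m\<in>{1..K}. majority_winner Np K V m"
proof -
  let ?f = "votes Np V"
  let ?is_max = "\<lambda>m. m \<in> {1..K} \<and> (\<forall>c\<in>{1..K}. ?f c \<le> ?f m)"
  obtain m0 where "m0 \<in> {1..K}" "?f m0 = Max (?f ` {1..K})"
    using Max_in[of "?f ` {1..K}"] assms by fastforce
  then have "\<exists>m. ?is_max m"
    by (metis Max_ge finite_atLeastAtMost finite_imageI imageI)
  define m where "m = (LEAST m. ?is_max m)"
  have m: "?is_max m"
    unfolding m_def using \<open>\<exists>m. ?is_max m\<close> by (rule LeastI_ex)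
  have "beats Np V m c" if c: "c \<in> {1..K} - {m}" for c
  proof (cases "c < m")
    case True
    then have "\<not> ?is_max c"
      unfolding m_def by (rule not_less_Least)
    then have "?f c < ?f m"
      using c m by force
    then show ?thesis
      using True unfolding beats_def ind_lt_def by simp
  next
    case False
    then show ?thesis
      using c m unfolding beats_def ind_lt_def by simp
  qed
  then show ?thesis
    using m unfolding majority_winner_def by blast
qed

lemma unanimous_majority_winner:
  assumes "Np \<ge> 1" and "c' \<in> {1..K}"
  shows "\<exists>V. vote_config Np K V \<and> majority_winner Np K V c'"
proof -
  define V where "V = (\<lambda>i c. if i \<in> {1..Np} \<and> c = c' then 1 else 0 :: nat)"
  have votes_V: "votes Np V c = (if c = c' then int Np else 0)" for c
    unfolding votes_def V_def by auto
  have "vote_config Np K V"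
    using assms(2) unfolding vote_config_def V_def by (auto simp: sum.delta)
  moreover have "majority_winner Np K V c'"
    using assms(1) unfolding majority_winner_def beats_def ind_lt_def by (simp add: votes_V)
  ultimately show ?thesis
    by blast
qed

lemma P1_le_cost:
  assumes "vote_config Np K V" and "majority_winner Np K V c'"
  shows "P1 Np K \<rho> c' \<le> cost Np K \<rho> V"
  unfolding P1_eq_Min_winner_costs
  using assms finite_vote_configs by (intro Min_le) auto

lemma P1_attained:
  assumes "Np \<ge> 1" and "c' \<in> {1..K}"
  obtains V where "vote_config Np K V" "majority_winner Np K V c'" "P1 Np K \<rho> c' = cost Np K \<rho> V"
proof -
  have "P1 Np K \<rho> c' \<in> cost Np K \<rho> ` {V. vote_config Np K V \<and> majority_winner Np K V c'}"
    unfolding P1_eq_Min_winner_costs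
    using unanimous_majority_winner[OF assms] finite_vote_configs by (intro Min_in) auto
  then show thesis
    using that by auto
qed

theorem lemma1p2:
  fixes Np K cstar c1 :: nat and \<rho> :: "nat \<Rightarrow> nat \<Rightarrow> real"
  assumes "Np \<ge> 1" and "K \<ge> 2" and "cstar \<in> {1..K}"
    and "c1 \<in> {1..K} - {cstar}"
    and "\<forall>c'\<in>{1..K} - {cstar}. P1 Np K \<rho> c1 \<le> P1 Np K \<rho> c'"
  shows "P1 Np K \<rho> c1 = P2 Np K \<rho> cstar c1"
proof -
  obtain V1 where V1: "vote_config Np K V1" "majority_winner Np K V1 c1" "P1 Np K \<rho> c1 = cost Np K \<rho> V1"
    using P1_attained assms(1,4) by blast
  have lower_bound: "P1 Np K \<rho> c1 \<le> cost Np K \<rho> V"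
    if V: "vote_config Np K V" "beats Np V c1 cstar" for V
  proof -
    obtain m where m: "m \<in> {1..K}" "majority_winner Np K V m"
      using majority_winner_exists[of K Np V] assms(2) by auto
    have "m \<noteq> cstar"
      using m(2) V(2) assms(4) beats_asym[of c1 cstar Np V] unfolding majority_winner_def by auto
    then have "P1 Np K \<rho> c1 \<le> P1 Np K \<rho> m"
      using assms(5) m(1) by blast
    also have "\<dots> \<le> cost Np K \<rho> V"
      using V(1) m(2) by (rule P1_le_cost)
    finally show ?thesis .
  qed
  have "beats Np V1 c1 cstar"
    using V1(2) assms(3,4) unfolding majority_winner_def by blast
  then show ?thesis
    unfolding P2_eq_Min_beating_costs
    using V1 lower_bound finite_vote_configs by (intro Min_eqI[symmetric]) auto
qed

end
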